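(* Let $l<u$ be real, let $\Delta Q$ be real with $0<\Delta Q\le u-l$, and let $\epsilon\ge0$, $0\le\delta<1$. Let $b^*>0$ satisfy $f(b^* )=b^*$. Then for every $\xi>0$, $f(b^*+\xi)$ is defined and $b^*+\xi> f(b^*+\xi)$.
   Context: For $b>0$ and $p\in[l,u]$, $C_p(b)= 1-\frac12\left(e^{-\frac{p-l}{b}}+e^{-\frac{u-p}{b}}\right)$ (the integral $\int_l^u\frac{1}{2b}e^{-|x-p|/b}dx$), and $\Delta C(b)=\frac{C_{l+\Delta Q}(b)}{C_l(b)}$. The map $f$ is defined for $b>0$ with $\epsilon-\log\Delta C(b)-\log(1-\delta)\neq 0$ by $f(b)=\frac{\Delta Q}{\epsilon-\log\Delta C(b)-\log(1-\delta)}$. *)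

theory Defs
  imports "HOL-Analysis.Analysis"
begin

text \<open>Mass of the Laplace distribution centred at p with scale b on [l,u].\<close>
definition Cp :: "real \<Rightarrow> real \<Rightarrow> real \<Rightarrow> real \<Rightarrow> real" where
  "Cp l u p b = 1 - (exp (- (p - l) / b) + exp (- (u - p) / b)) / 2"

definition DeltaC :: "real \<Rightarrow> real \<Rightarrow> real \<Rightarrow> real \<Rightarrow> real" where
  "DeltaC l u dQ b = Cp l u (l + dQ) b / Cp l u l b"

definition f_den :: "real \<Rightarrow> real \<Rightarrow> real \<Rightarrow> real \<Rightarrow> real \<Rightarrow> real \<Rightarrow> real" where
  "f_den l u dQ eps delta b = eps - ln (DeltaC l u dQ b) - ln (1 - delta)"

definition f_defined :: "real \<Rightarrow> real \<Rightarrow> real \<Rightarrow> real \<Rightarrow> real \<Rightarrow> real \<Rightarrow> bool" where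
  "f_defined l u dQ eps delta b \<longleftrightarrow> b > 0 \<and> f_den l u dQ eps delta b \<noteq> 0"

definition f :: "real \<Rightarrow> real \<Rightarrow> real \<Rightarrow> real \<Rightarrow> real \<Rightarrow> real \<Rightarrow> real" where
  "f l u dQ eps delta b = dQ / f_den l u dQ eps delta b"

end

theory Submission
  imports Defs
begin

text \<open>With \<open>p = 1 - exp (-\<Delta>Q/b)\<close> and \<open>q = 1 - exp (-(u - l - \<Delta>Q)/b)\<close> one has
  \<open>\<Delta>C(b) = 1 / (1 - pq/(p + q))\<close>. Both \<open>p\<close> and \<open>q\<close> decrease in \<open>b\<close>, hence so does
  \<open>pq/(p + q)\<close>, so the denominator of \<open>f\<close> is nondecreasing in \<open>b\<close>. At the fixed point it
  equals \<open>\<Delta>Q/b\<^sup>*\<close>, so for \<open>b > b\<^sup>*\<close> it stays positive and \<open>f(b) \<le> b\<^sup>* < b\<close>.\<close>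

definition exp_cdf :: "real \<Rightarrow> real \<Rightarrow> real" where
  "exp_cdf c b = 1 - exp (- c / b)"

lemma exp_cdf_nonneg: "0 \<le> c \<Longrightarrow> 0 < b \<Longrightarrow> 0 \<le> exp_cdf c b"
  unfolding exp_cdf_def by (simp add: divide_nonneg_pos)

lemma exp_cdf_pos: "0 < c \<Longrightarrow> 0 < b \<Longrightarrow> 0 < exp_cdf c b"
  unfolding exp_cdf_def by (simp add: divide_pos_pos)

lemma exp_cdf_less_1: "exp_cdf c b < 1"
  unfolding exp_cdf_def by simp

lemma exp_cdf_antimono: "0 \<le> c \<Longrightarrow> 0 < b1 \<Longrightarrow> b1 \<le> b2 \<Longrightarrow> exp_cdf c b2 \<le> exp_cdf c b1"
  unfolding exp_cdf_def by (simp add: frac_le)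

lemma prod_div_sum_mono:
  fixes p q p' q' :: real
  assumes "0 < p" "p \<le> p'" "0 \<le> q" "q \<le> q'"
  shows "p * q / (p + q) \<le> p' * q' / (p' + q')"
proof -
  have "p * q * p' \<le> p' * q' * p"
    using assms by (simp add: mult_left_mono mult.commute mult.left_commute)
  moreover have "p * q * q' \<le> p' * q' * q"
    using assms by (simp add: mult_mono mult.commute mult.left_commute)
  ultimately have "p * q * (p' + q') \<le> p' * q' * (p + q)"
    by (simp add: algebra_simps)
  moreover have "0 < p + q" "0 < p' + q'" using assms by auto
  ultimately show ?thesis by (simp add: divide_simps)
qed

lemma prod_div_sum_less_1:
  fixes p q :: real
  assumes "0 < p" "0 \<le> q" "q < 1"
  shows "p * q / (p + q) < 1"
proof -
  have "p * q < p" using assms by (simp add: mult_strict_left_mono[of q 1 p, simplified])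
  then have "p * q < p + q" using assms by linarith
  with assms show ?thesis by simp
qed

lemma DeltaC_eq:
  assumes "0 < dQ" "dQ \<le> u - l" "0 < b"
  defines "p \<equiv> exp_cdf dQ b" and "q \<equiv> exp_cdf (u - l - dQ) b"
  shows "DeltaC l u dQ b = 1 / (1 - p * q / (p + q))"
proof -
  have p: "0 < p" "p < 1" using assms exp_cdf_pos exp_cdf_less_1 by auto
  have q: "0 \<le> q" "q < 1" using assms exp_cdf_nonneg exp_cdf_less_1 by auto
  have "exp (- (u - l) / b) = (1 - p) * (1 - q)"
    unfolding p_def q_def exp_cdf_def by (simp add: exp_add[symmetric] diff_divide_distrib)
  then have num_den: "Cp l u (l + dQ) b = (p + q) / 2" "Cp l u l b = (p + q - p * q) / 2"
    unfolding Cp_def p_def q_def exp_cdf_def by (simp_all add: algebra_simps)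
  have "p * q < p + q" using prod_div_sum_less_1[OF p(1) q] p q by simp
  then show ?thesis
    unfolding DeltaC_def num_den using p q by (simp add: field_simps)
qed

lemma f_den_eq:
  assumes "0 < dQ" "dQ \<le> u - l" "0 < b"
  defines "p \<equiv> exp_cdf dQ b" and "q \<equiv> exp_cdf (u - l - dQ) b"
  shows "f_den l u dQ eps delta b = eps - ln (1 - delta) + ln (1 - p * q / (p + q))"
proof -
  have "p * q / (p + q) < 1"
    unfolding p_def q_def
    by (rule prod_div_sum_less_1) (use assms exp_cdf_pos exp_cdf_nonneg exp_cdf_less_1 in auto)
  then show ?thesis
    unfolding f_den_def DeltaC_eq[OF assms(1-3)] p_def q_def by (simp add: ln_div)
qed

lemma f_den_mono:
  assumes "0 < dQ" "dQ \<le> u - l" "0 < b1" "b1 \<le> b2"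
  shows "f_den l u dQ eps delta b1 \<le> f_den l u dQ eps delta b2"
proof -
  define p1 q1 p2 q2
    where "p1 = exp_cdf dQ b1" and "q1 = exp_cdf (u - l - dQ) b1"
      and "p2 = exp_cdf dQ b2" and "q2 = exp_cdf (u - l - dQ) b2"
  note defs = p1_def q1_def p2_def q2_def
  have "0 < p2" "p2 \<le> p1" "0 \<le> q2" "q2 \<le> q1"
    unfolding defs
    using assms exp_cdf_pos exp_cdf_nonneg exp_cdf_antimono by auto
  then have "p2 * q2 / (p2 + q2) \<le> p1 * q1 / (p1 + q1)"
    by (rule prod_div_sum_mono)
  moreover have "p1 * q1 / (p1 + q1) < 1"
    unfolding defs
    by (rule prod_div_sum_less_1) (use assms exp_cdf_pos exp_cdf_nonneg exp_cdf_less_1 in auto)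
  ultimately have "ln (1 - p1 * q1 / (p1 + q1)) \<le> ln (1 - p2 * q2 / (p2 + q2))"
    by simp
  then show ?thesis
    using f_den_eq[of dQ u l b1] f_den_eq[of dQ u l b2] assms
    unfolding defs by simp
qed

theorem mainTheorem9:
  fixes l u dQ eps delta bstar :: real
  assumes "l < u" and "0 < dQ" and "dQ \<le> u - l"
    and "0 \<le> eps" and "0 \<le> delta" and "delta < 1"
    and "bstar > 0"
    and "f_defined l u dQ eps delta bstar"
    and "f l u dQ eps delta bstar = bstar"
  shows "\<forall>\<xi>>0. f_defined l u dQ eps delta (bstar + \<xi>)
                \<and> bstar + \<xi> > f l u dQ eps delta (bstar + \<xi>)"
proof (intro allI impI)
  fix \<xi> :: real
  assume "\<xi> > 0"
  define b where "b = bstar + \<xi>"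
  let ?den = "f_den l u dQ eps delta"
  have den_fixed: "?den bstar = dQ / bstar"
    using assms(7-9) unfolding f_defined_def f_def by (auto simp: field_simps)
  have den_le: "?den bstar \<le> ?den b"
    using f_den_mono assms \<open>\<xi> > 0\<close> b_def by simp
  have "0 < ?den bstar" using den_fixed assms by simp
  then have "f l u dQ eps delta b \<le> dQ / ?den bstar"
    unfolding f_def using den_le assms(2) by (simp add: frac_le)
  also have "\<dots> = bstar" using den_fixed assms by simp
  finally have "f l u dQ eps delta b < b" using \<open>\<xi> > 0\<close> b_def by simp
  moreover have "f_defined l u dQ eps delta b"
    unfolding f_defined_def using den_le \<open>0 < ?den bstar\<close> assms b_def \<open>\<xi> > 0\<close> by simp
  ultimately show "f_defined l u dQ eps delta (bstar + \<xi>) \<and> bstar + \<xi> > f l u dQ eps delta (bstar + \<xi>)"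
    using b_def by simp
qed

end
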